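(* Let $n\ge1$ and let $\mathscr{Q}$ be the set of all subsets of the Hamming cube $\{0,1\}^n\subset\ell_1^{(n)}$ (with the $\ell_1$ metric) that have strict $1$-negative type. Then there exists $q>1$ such that $\mathfrak{q}(S)\ge q$ for all $S\in\mathscr{Q}$.
   Context: For $p\ge0$, a metric space $(X,d)$ has $p$-negative type if for all finite $\{x_1,\ldots,x_m\}\subseteq X$ ($m\ge2$) and all reals $\eta_1,\ldots,\eta_m$ with $\sum\eta_i=0$, $\sum_{i,j}d(x_i,x_j)^p\eta_i\eta_j\le 0$; it has strict $p$-negative type if moreover this inequality is strict whenever $(\eta_1,\ldots,\eta_m)\ne0$. $p$ is a generalized roundness exponent if for all $m$ and all $a_1,\ldots,a_m,b_1,\ldots,b_m\in X$, $\sum_{k<l}\{d(a_k,a_l)^p+d(b_k,b_l)^p\}\le\sum_{j,i}d(a_j,b_i)^p$; the generalized roundness $\mathfrak{q}(X)$ is the supremum of all generalized roundness exponents. *)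

theory Defs
  imports Complex_Main "HOL-Library.Extended_Real"
begin

definition p_negative_type :: "'a set \<Rightarrow> ('a \<Rightarrow> 'a \<Rightarrow> real) \<Rightarrow> real \<Rightarrow> bool" where
  "p_negative_type X d p \<longleftrightarrow>
     (\<forall>m::nat. \<forall>x::nat \<Rightarrow> 'a. \<forall>\<eta>::nat \<Rightarrow> real.
        m \<ge> 2 \<and> inj_on x {..<m} \<and> x ` {..<m} \<subseteq> X \<and> (\<Sum>i<m. \<eta> i) = 0 \<longrightarrow>
        (\<Sum>i<m. \<Sum>j<m. d (x i) (x j) powr p * \<eta> i * \<eta> j) \<le> 0)"

definition strict_p_negative_type :: "'a set \<Rightarrow> ('a \<Rightarrow> 'a \<Rightarrow> real) \<Rightarrow> real \<Rightarrow> bool" where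
  "strict_p_negative_type X d p \<longleftrightarrow> p_negative_type X d p \<and>
     (\<forall>m::nat. \<forall>x::nat \<Rightarrow> 'a. \<forall>\<eta>::nat \<Rightarrow> real.
        m \<ge> 2 \<and> inj_on x {..<m} \<and> x ` {..<m} \<subseteq> X \<and> (\<Sum>i<m. \<eta> i) = 0
        \<and> (\<exists>i<m. \<eta> i \<noteq> 0) \<longrightarrow>
        (\<Sum>i<m. \<Sum>j<m. d (x i) (x j) powr p * \<eta> i * \<eta> j) < 0)"

definition gen_roundness_exponent :: "'a set \<Rightarrow> ('a \<Rightarrow> 'a \<Rightarrow> real) \<Rightarrow> real \<Rightarrow> bool" where
  "gen_roundness_exponent X d p \<longleftrightarrow>
     (\<forall>m::nat. \<forall>a b :: nat \<Rightarrow> 'a.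
        a ` {..<m} \<subseteq> X \<and> b ` {..<m} \<subseteq> X \<longrightarrow>
        (\<Sum>k<m. \<Sum>l<m. if k < l then d (a k) (a l) powr p + d (b k) (b l) powr p else 0)
          \<le> (\<Sum>j<m. \<Sum>i<m. d (a j) (b i) powr p))"

definition gen_roundness :: "'a set \<Rightarrow> ('a \<Rightarrow> 'a \<Rightarrow> real) \<Rightarrow> ereal" where
  "gen_roundness X d = (SUP p \<in> {p. p \<ge> 0 \<and> gen_roundness_exponent X d p}. ereal p)"

text \<open>The Hamming cube {0,1}^n with the l1 metric; coordinates are indexed by a finite type 'n,
  n = CARD('n) \<ge> 1.\<close>
definition hamming_dist :: "('n::finite \<Rightarrow> bool) \<Rightarrow> ('n \<Rightarrow> bool) \<Rightarrow> real" where
  "hamming_dist x y = (\<Sum>i\<in>UNIV. \<bar>(if x i then 1 else 0) - (if y i then 1 else 0)\<bar>)"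

end

theory Submission
  imports Defs "HOL-Analysis.Analysis"
begin

text \<open>On a finite set S, strict 1-negative type says that the quadratic form of the metric is
  negative definite on the hyperplane of zero-sum vectors. By compactness of the l1-unit sphere
  of that hyperplane the form is bounded away from 0 there, and since the finitely many
  distances d^p depend continuously on p, the form of d^p stays nonpositive for all p slightly
  above 1. Nonpositivity of the form of d^p on zero-sum vectors yields the generalized roundness
  inequality, by testing it on the sum of the differences of the point masses at a_k and b_k.
  Finally the Hamming cube has only finitely many subsets, so the minimum of the exponents
  obtained for them is still above 1.\<close>

definition quad_form :: "'a set \<Rightarrow> ('a \<Rightarrow> 'a \<Rightarrow> real) \<Rightarrow> ('a \<Rightarrow> real) \<Rightarrow> real" where
  "quad_form S K v = (\<Sum>x\<in>S. \<Sum>y\<in>S. K x y * v x * v y)"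

lemma quad_form_neg_if_strict_negative_type:
  assumes strict: "strict_p_negative_type S D p" and fin: "finite S"
    and sum_zero: "(\<Sum>x\<in>S. v x) = 0" and nonzero: "\<exists>x\<in>S. v x \<noteq> 0"
  shows "quad_form S (\<lambda>x y. D x y powr p) v < 0"
proof -
  obtain e where e: "bij_betw e {..<card S} S"
    using ex_bij_betw_nat_finite[OF fin] atLeast0LessThan by metis
  obtain x0 where x0: "x0 \<in> S" "v x0 \<noteq> 0" using nonzero by blast
  have "card S \<ge> 2"
  proof (rule ccontr)
    assume "\<not> card S \<ge> 2"
    then have "S = {x0}" using x0 card_le_Suc0_iff_eq[OF fin] by auto
    then show False using sum_zero x0 by simp
  qed
  moreover have "inj_on e {..<card S}" "e ` {..<card S} = S"
    using e by (auto simp: bij_betw_def)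
  moreover have "(\<Sum>i<card S. v (e i)) = 0"
    using sum.reindex_bij_betw[OF e, of v] sum_zero by simp
  moreover have "\<exists>i<card S. v (e i) \<noteq> 0"
    using x0 \<open>e ` {..<card S} = S\<close> by (metis imageE lessThan_iff)
  ultimately have "(\<Sum>i<card S. \<Sum>j<card S. D (e i) (e j) powr p * v (e i) * v (e j)) < 0"
    using strict unfolding strict_p_negative_type_def by blast
  also have "(\<Sum>i<card S. \<Sum>j<card S. D (e i) (e j) powr p * v (e i) * v (e j))
      = quad_form S (\<lambda>x y. D x y powr p) v"
    unfolding quad_form_def
    using sum.reindex_bij_betw[OF e, of "\<lambda>x. \<Sum>y\<in>S. D x y powr p * v x * v y"]
      sum.reindex_bij_betw[OF e, of "\<lambda>y. D (e _) y powr p * v (e _) * v y"]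
    by simp
  finally show ?thesis .
qed

lemma quad_form_uniformly_neg_on_l1_sphere:
  fixes S :: "'a::finite set"
  assumes neg: "\<And>v. (\<Sum>x\<in>S. v x) = 0 \<Longrightarrow> \<exists>x\<in>S. v x \<noteq> 0 \<Longrightarrow> quad_form S K v < 0"
  shows "\<exists>c>0. \<forall>v. (\<Sum>x\<in>S. v x) = 0 \<longrightarrow> (\<Sum>x\<in>S. \<bar>v x\<bar>) = 1 \<longrightarrow> quad_form S K v \<le> -c"
proof -
  \<comment> \<open>Functions on S are encoded as vectors of \<open>real^'a\<close> vanishing off S, where compactness is available.\<close>
  define sphere where "sphere = {w::real^'a. (\<Sum>x\<in>-S. \<bar>w$x\<bar>) = 0 \<and> (\<Sum>x\<in>S. w$x) = 0
                                   \<and> (\<Sum>x\<in>S. \<bar>w$x\<bar>) = 1}"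
  define f where "f w = quad_form S K (\<lambda>x. w$x)" for w :: "real^'a"
  define ext where "ext v = (\<chi> x. if x \<in> S then v x else 0)" for v :: "'a \<Rightarrow> real"
  have ext_in: "ext v \<in> sphere" if "(\<Sum>x\<in>S. v x) = 0" "(\<Sum>x\<in>S. \<bar>v x\<bar>) = 1" for v
    using that by (auto simp: sphere_def ext_def)
  have f_ext: "f (ext v) = quad_form S K v" for v
    unfolding f_def ext_def quad_form_def by (intro sum.cong refl) auto
  show ?thesis
  proof (cases "sphere = {}")
    case True
    then show ?thesis using ext_in by (intro exI[of _ 1]) auto
  next
    case False
    have "closed sphere" unfolding sphere_def
      by (intro closed_Collect_conj closed_Collect_eq continuous_intros)
    moreover have "bounded sphere" unfolding bounded_iff
    proof (intro exI ballI)
      fix w assume w: "w \<in> sphere"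
      have "norm w \<le> (\<Sum>x\<in>UNIV. \<bar>w$x\<bar>)" by (rule norm_le_l1_cart)
      also have "\<dots> = (\<Sum>x\<in>S. \<bar>w$x\<bar>) + (\<Sum>x\<in>-S. \<bar>w$x\<bar>)"
        using sum.union_disjoint[of S "-S" "\<lambda>x. \<bar>w$x\<bar>"] by (simp add: Compl_partition)
      finally show "norm w \<le> 1" using w by (simp add: sphere_def)
    qed
    ultimately have "compact sphere" by (simp add: compact_eq_bounded_closed)
    moreover have "continuous_on sphere f"
      unfolding f_def quad_form_def by (intro continuous_intros)
    ultimately obtain w0 where w0: "w0 \<in> sphere" "\<forall>w\<in>sphere. f w \<le> f w0"
      using continuous_attains_sup[OF _ False] by blast
    have "\<exists>x\<in>S. w0$x \<noteq> 0"
    proof (rule ccontr)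
      assume "\<not> (\<exists>x\<in>S. w0$x \<noteq> 0)"
      then have "(\<Sum>x\<in>S. \<bar>w0$x\<bar>) = 0" by simp
      then show False using w0(1) by (simp add: sphere_def)
    qed
    then have "f w0 < 0" using neg[of "\<lambda>x. w0$x"] w0(1) by (simp add: sphere_def f_def)
    then show ?thesis
      using w0(2) ext_in f_ext by (intro exI[of _ "- f w0"]) fastforce
  qed
qed

lemma quad_form_scale: "quad_form S K (\<lambda>x. a * v x) = a\<^sup>2 * quad_form S K v"
  unfolding quad_form_def by (simp add: sum_distrib_left power2_eq_square mult_ac)

lemma quad_form_le_add_kernel_distance:
  assumes fin: "finite S" and l1: "(\<Sum>x\<in>S. \<bar>w x\<bar>) \<le> 1"
  shows "quad_form S E w \<le> quad_form S K w + (\<Sum>x\<in>S. \<Sum>y\<in>S. \<bar>E x y - K x y\<bar>)"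
proof -
  have w_le: "\<bar>w x\<bar> \<le> 1" if "x \<in> S" for x
    using member_le_sum[of x S "\<lambda>x. \<bar>w x\<bar>"] that fin l1 by simp
  have "(E x y - K x y) * w x * w y \<le> \<bar>E x y - K x y\<bar>" if "x \<in> S" "y \<in> S" for x y
  proof -
    have "(E x y - K x y) * w x * w y \<le> \<bar>E x y - K x y\<bar> * (\<bar>w x\<bar> * \<bar>w y\<bar>)"
      using abs_ge_self[of "(E x y - K x y) * w x * w y"] by (simp add: abs_mult mult.assoc)
    also have "\<dots> \<le> \<bar>E x y - K x y\<bar>"
      using w_le that by (intro mult_left_le mult_le_one) auto
    finally show ?thesis .
  qed
  then have "quad_form S (\<lambda>x y. E x y - K x y) w \<le> (\<Sum>x\<in>S. \<Sum>y\<in>S. \<bar>E x y - K x y\<bar>)"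
    unfolding quad_form_def by (intro sum_mono) auto
  moreover have "quad_form S E w = quad_form S K w + quad_form S (\<lambda>x y. E x y - K x y) w"
    unfolding quad_form_def by (simp add: sum.distrib[symmetric] algebra_simps)
  ultimately show ?thesis by linarith
qed

lemma quad_form_nonpos_of_close_kernel:
  assumes fin: "finite S"
    and margin: "\<forall>w. (\<Sum>x\<in>S. w x) = 0 \<longrightarrow> (\<Sum>x\<in>S. \<bar>w x\<bar>) = 1 \<longrightarrow> quad_form S K w \<le> -c"
    and close: "(\<Sum>x\<in>S. \<Sum>y\<in>S. \<bar>E x y - K x y\<bar>) < c"
    and sum_zero: "(\<Sum>x\<in>S. v x) = 0"
  shows "quad_form S E v \<le> 0"
proof (cases "(\<Sum>x\<in>S. \<bar>v x\<bar>) = 0")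
  case True
  then have "\<forall>x\<in>S. v x = 0" using sum_nonneg_eq_0_iff[OF fin, of "\<lambda>x. \<bar>v x\<bar>"] by simp
  then show ?thesis by (simp add: quad_form_def)
next
  case False
  define s where "s = (\<Sum>x\<in>S. \<bar>v x\<bar>)"
  have "s > 0" using False unfolding s_def by (simp add: order_le_neq_trans sum_nonneg)
  define w where "w x = v x / s" for x
  have "(\<Sum>x\<in>S. w x) = 0" "(\<Sum>x\<in>S. \<bar>w x\<bar>) = 1"
    using sum_zero \<open>s > 0\<close> by (simp_all add: w_def s_def flip: sum_divide_distrib)
  then have "quad_form S E w \<le> 0"
    using quad_form_le_add_kernel_distance[OF fin, of w E K] margin close by fastforce
  moreover have "v = (\<lambda>x. s * w x)" using \<open>s > 0\<close> by (simp add: w_def)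
  ultimately show ?thesis by (simp add: quad_form_scale mult_nonneg_nonpos)
qed

lemma tendsto_sum_abs_powr_diff:
  fixes D :: "'a \<Rightarrow> 'a \<Rightarrow> real"
  assumes nonneg: "\<And>x y. D x y \<ge> 0"
  shows "((\<lambda>p. \<Sum>x\<in>S. \<Sum>y\<in>S. \<bar>D x y powr p - D x y\<bar>) \<longlongrightarrow> 0) (at_right 1)"
proof -
  have "((\<lambda>p. \<bar>D x y powr p - D x y\<bar>) \<longlongrightarrow> 0) (at_right 1)" for x y
  proof (cases "D x y = 0")
    case False
    then have "((\<lambda>p. D x y powr p) \<longlongrightarrow> D x y powr 1) (at_right 1)"
      by (intro tendsto_intros) auto
    then have "((\<lambda>p. \<bar>D x y powr p - D x y\<bar>) \<longlongrightarrow> \<bar>D x y powr 1 - D x y\<bar>) (at_right 1)"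
      using False by (intro tendsto_intros) auto
    then show ?thesis using nonneg[of x y] by simp
  qed simp
  then have "((\<lambda>p. \<Sum>x\<in>S. \<Sum>y\<in>S. \<bar>D x y powr p - D x y\<bar>) \<longlongrightarrow> (\<Sum>x\<in>S. \<Sum>y\<in>S. 0)) (at_right 1)"
    by (intro tendsto_sum)
  then show ?thesis by simp
qed

lemma sum_symmetric_eq_twice_upper:
  fixes G :: "nat \<Rightarrow> nat \<Rightarrow> real"
  assumes sym: "\<And>k l. G k l = G l k" and diag: "\<And>k. G k k = 0"
  shows "(\<Sum>k<m. \<Sum>l<m. G k l) = 2 * (\<Sum>k<m. \<Sum>l<m. if k < l then G k l else 0)"
proof -
  have decomp: "G k l = (if k < l then G k l else 0) + (if l < k then G k l else 0)" for k l
    using diag[of k] by (cases k l rule: linorder_cases) auto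
  have "(\<Sum>k<m. \<Sum>l<m. if l < k then G k l else 0) = (\<Sum>l<m. \<Sum>k<m. if l < k then G k l else 0)"
    by (rule sum.swap)
  also have "\<dots> = (\<Sum>k<m. \<Sum>l<m. if k < l then G k l else 0)"
    by (intro sum.cong refl) (simp add: sym)
  finally show ?thesis
    by (subst decomp) (simp add: sum.distrib)
qed

lemma sum_mult_point_mass_diff:
  assumes "finite S" "a \<in> S" "b \<in> S"
  shows "(\<Sum>x\<in>S. g x * (of_bool (a = x) - of_bool (b = x))) = (g a - g b :: real)"
proof -
  have "g x * (of_bool (a = x) - of_bool (b = x)) = (if a = x then g x else 0) - (if b = x then g x else 0)"
    for x by simp
  then show ?thesis
    using assms by (simp add: sum_subtractf sum.delta)
qed

lemma quad_form_point_mass_diffs: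
  assumes fin: "finite S" and ab: "a ` {..<m} \<subseteq> S" "b ` {..<m} \<subseteq> S"
  defines "v \<equiv> \<lambda>x. \<Sum>k<m. of_bool (a k = x) - of_bool (b k = x)"
  shows "(\<Sum>x\<in>S. v x) = 0"
    and "quad_form S F v = (\<Sum>k<m. \<Sum>l<m. F (a k) (a l)) + (\<Sum>k<m. \<Sum>l<m. F (b k) (b l))
                          - (\<Sum>k<m. \<Sum>l<m. F (a k) (b l)) - (\<Sum>k<m. \<Sum>l<m. F (b k) (a l))"
      (is "_ = ?rhs")
proof -
  have pair: "(\<Sum>x\<in>S. g x * v x) = (\<Sum>k<m. g (a k) - g (b k))" for g
    unfolding v_def sum_distrib_left
    using ab by (subst sum.swap) (auto intro!: sum.cong sum_mult_point_mass_diff[OF fin])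
  show "(\<Sum>x\<in>S. v x) = 0" using pair[of "\<lambda>_. 1"] by simp
  have "quad_form S F v = (\<Sum>x\<in>S. (\<Sum>y\<in>S. F x y * v y) * v x)"
    unfolding quad_form_def sum_distrib_right by (simp add: mult_ac)
  also have "\<dots> = (\<Sum>x\<in>S. (\<Sum>l<m. F x (a l) - F x (b l)) * v x)"
    using pair by simp
  also have "\<dots> = (\<Sum>k<m. (\<Sum>l<m. F (a k) (a l) - F (a k) (b l)) - (\<Sum>l<m. F (b k) (a l) - F (b k) (b l)))"
    using pair[of "\<lambda>x. \<Sum>l<m. F x (a l) - F x (b l)"] by (simp add: mult.commute)
  also have "\<dots> = ?rhs"
    by (simp add: sum_subtractf)
  finally show "quad_form S F v = ?rhs" .
qed

lemma gen_roundness_exponentI_quad_form: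
  assumes fin: "finite S" and sym: "\<And>x y. D x y = D y x" and diag: "\<And>x. D x x = 0"
    and nonpos: "\<And>v. (\<Sum>x\<in>S. v x) = 0 \<Longrightarrow> quad_form S (\<lambda>x y. D x y powr p) v \<le> 0"
  shows "gen_roundness_exponent S D p"
  unfolding gen_roundness_exponent_def
proof (intro allI impI)
  fix m :: nat and a b :: "nat \<Rightarrow> 'a"
  assume "a ` {..<m} \<subseteq> S \<and> b ` {..<m} \<subseteq> S"
  then have ab: "a ` {..<m} \<subseteq> S" "b ` {..<m} \<subseteq> S" by auto
  define F where "F x y = D x y powr p" for x y
  have F_sym: "F x y = F y x" and F_diag: "F x x = 0" for x y
    by (simp_all add: F_def sym diag)
  have "(\<Sum>k<m. \<Sum>l<m. F (a k) (a l)) + (\<Sum>k<m. \<Sum>l<m. F (b k) (b l))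
        - (\<Sum>k<m. \<Sum>l<m. F (a k) (b l)) - (\<Sum>k<m. \<Sum>l<m. F (b k) (a l)) \<le> 0"
    using nonpos[OF quad_form_point_mass_diffs(1)[OF fin ab]]
    unfolding quad_form_point_mass_diffs(2)[OF fin ab] F_def .
  moreover have "(\<Sum>k<m. \<Sum>l<m. F (b k) (a l)) = (\<Sum>k<m. \<Sum>l<m. F (a k) (b l))"
    by (subst sum.swap) (simp add: F_sym)
  moreover have "(\<Sum>k<m. \<Sum>l<m. F (a k) (a l)) = 2 * (\<Sum>k<m. \<Sum>l<m. if k < l then F (a k) (a l) else 0)"
    "(\<Sum>k<m. \<Sum>l<m. F (b k) (b l)) = 2 * (\<Sum>k<m. \<Sum>l<m. if k < l then F (b k) (b l) else 0)"
    by (rule sum_symmetric_eq_twice_upper; simp add: F_sym F_diag)+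
  moreover have "(\<Sum>k<m. \<Sum>l<m. if k < l then F (a k) (a l) + F (b k) (b l) else 0)
     = (\<Sum>k<m. \<Sum>l<m. if k < l then F (a k) (a l) else 0) + (\<Sum>k<m. \<Sum>l<m. if k < l then F (b k) (b l) else 0)"
    by (simp add: if_distrib flip: sum.distrib) (intro sum.cong refl, auto)
  ultimately have "(\<Sum>k<m. \<Sum>l<m. if k < l then F (a k) (a l) + F (b k) (b l) else 0)
          \<le> (\<Sum>j<m. \<Sum>i<m. F (a j) (b i))"
    by linarith
  then show "(\<Sum>k<m. \<Sum>l<m. if k < l then D (a k) (a l) powr p + D (b k) (b l) powr p else 0)
          \<le> (\<Sum>j<m. \<Sum>i<m. D (a j) (b i) powr p)"
    unfolding F_def .
qed

lemma ex_gen_roundness_exponent_gt_1: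
  fixes S :: "'a::finite set"
  assumes nonneg: "\<And>x y. D x y \<ge> 0" and sym: "\<And>x y. D x y = D y x" and diag: "\<And>x. D x x = 0"
    and strict: "strict_p_negative_type S D 1"
  shows "\<exists>p>1. gen_roundness_exponent S D p"
proof -
  have "quad_form S D v < 0" if "(\<Sum>x\<in>S. v x) = 0" "\<exists>x\<in>S. v x \<noteq> 0" for v
    using quad_form_neg_if_strict_negative_type[OF strict finite that] nonneg
    by (simp add: powr_one)
  then obtain c where "c > 0" and margin:
      "\<forall>v. (\<Sum>x\<in>S. v x) = 0 \<longrightarrow> (\<Sum>x\<in>S. \<bar>v x\<bar>) = 1 \<longrightarrow> quad_form S D v \<le> -c"
    using quad_form_uniformly_neg_on_l1_sphere by blast
  have "\<forall>\<^sub>F p in at_right 1. (\<Sum>x\<in>S. \<Sum>y\<in>S. \<bar>D x y powr p - D x y\<bar>) < c"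
    using order_tendstoD(2)[OF tendsto_sum_abs_powr_diff[OF nonneg] \<open>c > 0\<close>] .
  then have "\<forall>\<^sub>F p in at_right 1. p > 1 \<and> (\<Sum>x\<in>S. \<Sum>y\<in>S. \<bar>D x y powr p - D x y\<bar>) < c"
    using eventually_at_right_less eventually_conj by blast
  then obtain p where p: "p > 1" "(\<Sum>x\<in>S. \<Sum>y\<in>S. \<bar>D x y powr p - D x y\<bar>) < c"
    using eventually_happens'[OF trivial_limit_at_right_real] by blast
  have "gen_roundness_exponent S D p"
    by (rule gen_roundness_exponentI_quad_form[OF finite sym diag
          quad_form_nonpos_of_close_kernel[OF finite margin p(2)]])
  with p(1) show ?thesis by blast
qed

lemma ereal_le_gen_roundness:
  assumes "gen_roundness_exponent S D p" "p \<ge> 0"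
  shows "ereal p \<le> gen_roundness S D"
  unfolding gen_roundness_def using assms by (intro SUP_upper) simp

lemma finite_ex_uniform_lower_bound:
  fixes b :: real
  assumes "finite A" "\<forall>x\<in>A. \<exists>p>b. P x p"
  shows "\<exists>q>b. \<forall>x\<in>A. \<exists>p\<ge>q. P x p"
  using assms
proof (induction A rule: finite_induct)
  case empty
  show ?case by (intro exI[of _ "b + 1"]) simp
next
  case (insert x A)
  obtain q where q: "q > b" "\<forall>y\<in>A. \<exists>p\<ge>q. P y p" using insert by blast
  obtain p where p: "p > b" "P x p" using insert.prems by blast
  show ?case
  proof (rule exI[of _ "min q p"], intro conjI ballI)
    show "min q p > b" using q p by simp
    fix y assume "y \<in> insert x A"
    then show "\<exists>p'\<ge>min q p. P y p'"
      using q p by (metis insertE min.cobounded2 min.coboundedI1)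
  qed
qed

lemma hamming_dist_nonneg: "hamming_dist x y \<ge> 0"
  and hamming_dist_commute: "hamming_dist x y = hamming_dist y x"
  and hamming_dist_self: "hamming_dist x x = 0"
  unfolding hamming_dist_def by (auto intro: sum_nonneg sum.cong simp: abs_minus_commute)

theorem corollary4p6:
  "\<exists>q::real. q > 1 \<and>
     (\<forall>S :: ('n::finite \<Rightarrow> bool) set.
        strict_p_negative_type S hamming_dist 1 \<longrightarrow> gen_roundness S hamming_dist \<ge> ereal q)"
proof -
  let ?Q = "{S :: ('n \<Rightarrow> bool) set. strict_p_negative_type S hamming_dist 1}"
  have "\<forall>S\<in>?Q. \<exists>p>1. gen_roundness_exponent S hamming_dist p"
  proof
    fix S assume "S \<in> ?Q"
    then show "\<exists>p>1. gen_roundness_exponent S hamming_dist p"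
      by (intro ex_gen_roundness_exponent_gt_1[OF hamming_dist_nonneg hamming_dist_commute
            hamming_dist_self]) simp
  qed
  from finite_ex_uniform_lower_bound[OF finite this]
  obtain q where "q > 1" and q: "\<forall>S\<in>?Q. \<exists>p\<ge>q. gen_roundness_exponent S hamming_dist p"
    by blast
  have "ereal q \<le> gen_roundness S hamming_dist"
    if "strict_p_negative_type S hamming_dist 1" for S :: "('n \<Rightarrow> bool) set"
  proof -
    from that have "S \<in> ?Q" by simp
    with q obtain p where p: "p \<ge> q" "gen_roundness_exponent S hamming_dist p"
      by (elim ballE exE conjE) auto
    then have "ereal q \<le> ereal p" by simp
    also have "\<dots> \<le> gen_roundness S hamming_dist"
      using p \<open>q > 1\<close> by (intro ereal_le_gen_roundness) simp_all
    finally show ?thesis .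
  qed
  with \<open>q > 1\<close> show ?thesis by blast
qed

end
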